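(* Let $q\ge 2$ be a prime power, $n\ge 1$, and let $f\in\mathbb{F}_q[x]$, $f\ne 0$, with $0\le\deg f<n$. Let $A(f,n)$ be the number of $h\in\mathbb{F}_q[x]$ such that both $h$ and $h+f$ are monic irreducible polynomials of degree $n$, and let $\widetilde{A}(f,n)$ be the number of $h\in\mathbb{F}_q[x]$ such that both $h$ and $h+f$ are (not necessarily monic) irreducible polynomials of degree $n$. Then $$A(f,n)\le \frac{8q^n}{n^2(1-1/q)}E(f)\qquad\text{and}\qquad \widetilde{A}(f,n)\le\frac{8q^{n+1}}{n^2}E(f).$$
   Context: For $f\in\mathbb{F}_q[x]$, $|f|=q^{\deg f}$. The letter $p$ denotes a monic irreducible polynomial in $\mathbb{F}_q[x]$, and $E(f)=\prod_{p\mid f}\left(1+\frac{1}{|p|}\right)$, the product over monic irreducible divisors $p$ of $f$. *)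

theory Defs
  imports "HOL-Computational_Algebra.Polynomial_Factorial" "HOL-Library.Cardinality"
begin

definition poly_abs :: "'a::{finite,field} poly \<Rightarrow> real" where
  "poly_abs f = real CARD('a) ^ degree f"

definition E_fun :: "'a::{finite,field} poly \<Rightarrow> real" where
  "E_fun f = (\<Prod>p \<in> {p. lead_coeff p = 1 \<and> irreducible p \<and> p dvd f}. 1 + 1 / poly_abs p)"

definition A_count :: "'a::{finite,field} poly \<Rightarrow> nat \<Rightarrow> nat" where
  "A_count f n = card {h. lead_coeff h = 1 \<and> irreducible h \<and> degree h = n \<and>
                          lead_coeff (h + f) = 1 \<and> irreducible (h + f) \<and> degree (h + f) = n}"

definition A_tilde_count :: "'a::{finite,field} poly \<Rightarrow> nat \<Rightarrow> nat" where
  "A_tilde_count f n = card {h. irreducible h \<and> degree h = n \<and>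
                                irreducible (h + f) \<and> degree (h + f) = n}"

end

theory Submission
  imports Defs "HOL-Library.FuncSet"
begin

text \<open>
  The bound for \<open>A(f, n)\<close> comes from a Selberg upper-bound sieve over \<open>F\<^sub>q[x]\<close>. If \<open>h\<close>
  and \<open>h + f\<close> are irreducible of degree \<open>n\<close>, no monic irreducible \<open>p\<close> of degree at most
  \<open>z = n div 2\<close> divides \<open>h (h + f)\<close>, so \<open>h mod p\<close> avoids the residues \<open>a\<close> with
  \<open>p dvd a (a + f)\<close>: at least one of them, and at least two if \<open>p\<close> does not divide \<open>f\<close>.
  Squaring a suitable combination of centred residue indicators and using the Chinese remainder
  theorem, the number of sifted \<open>h\<close> is at most \<open>q ^ n / G\<close>, where \<open>G\<close> sums
  \<open>\<Prod>p\<in>c. g p / (1 - g p)\<close> over the sets \<open>c\<close> of such primes of total degree at most \<open>z\<close>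
  and \<open>g p\<close> is the proportion of residues removed modulo \<open>p\<close>.

  To bound \<open>G\<close> from below, charge each pair \<open>(a, b)\<close> of monic polynomials with
  \<open>deg a + deg b \<le> z\<close> to the set of primes dividing \<open>a\<close>, or dividing \<open>b\<close> but not \<open>f\<close>. By
  unique factorisation the weights \<open>1 / |a b|\<close> charged to \<open>c\<close> add up to at most
  \<open>(\<Prod>p\<in>c. g p / (1 - g p)) * (\<Prod>p dvd f. |p| / (|p| - 1))\<close>, while all pairs together weigh
  \<open>(z + 1) (z + 2) / 2 \<ge> n\<^sup>2 / 8\<close>; an Euler product bounds the last factor by
  \<open>E(f) / (1 - 1 / q)\<close>. Non-monic pairs are reduced to monic ones by scaling with the \<open>q - 1\<close>
  units.
\<close>

section \<open>Polynomials of bounded degree and residues\<close>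

definition polys_below :: "nat \<Rightarrow> 'a::zero poly set" where
  "polys_below k = {r. r = 0 \<or> degree r < k}"

definition monic_polys :: "nat \<Rightarrow> 'a::{zero,one} poly set" where
  "monic_polys k = {h. lead_coeff h = 1 \<and> degree h = k}"

lemma polys_below_0 [simp]: "polys_below 0 = {0}"
  by (auto simp: polys_below_def)

lemma polys_below_Suc: "polys_below (Suc k) = (\<lambda>(a, r). pCons a r) ` (UNIV \<times> polys_below k)"
proof (intro set_eqI iffI)
  fix p :: "'a poly"
  assume "p \<in> polys_below (Suc k)"
  moreover obtain a r where "p = pCons a r" by (cases p)
  ultimately show "p \<in> (\<lambda>(a, r). pCons a r) ` (UNIV \<times> polys_below k)"
    by (force simp: polys_below_def split: if_splits)
qed (auto simp: polys_below_def split: if_splits)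

lemma monic_polys_0 [simp]: "monic_polys 0 = {1 :: 'a::field poly}"
  by (auto simp: monic_polys_def elim!: degree_eq_zeroE)

lemma monic_polys_Suc:
  "monic_polys (Suc k) = (\<lambda>(a, r). pCons a r) ` (UNIV \<times> (monic_polys k :: 'a::field poly set))"
proof (intro set_eqI iffI)
  fix p :: "'a poly"
  assume "p \<in> monic_polys (Suc k)"
  moreover obtain a r where "p = pCons a r" by (cases p)
  ultimately show "p \<in> (\<lambda>(a, r). pCons a r) ` (UNIV \<times> monic_polys k)"
    by (cases "r = 0") (force simp: monic_polys_def)+
qed (auto simp: monic_polys_def)

lemma inj_on_pCons: "inj_on (\<lambda>(a, r). pCons a r) A"
  by (auto simp: inj_on_def)

lemma card_polys_below: "card (polys_below k :: 'a::{finite,zero} poly set) = CARD('a) ^ k"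
  and finite_polys_below: "finite (polys_below k :: 'a::{finite,zero} poly set)"
  by (induction k) (simp_all add: polys_below_Suc card_image[OF inj_on_pCons] card_cartesian_product)

lemma card_monic_polys: "card (monic_polys k :: 'a::{finite,field} poly set) = CARD('a) ^ k"
  and finite_monic_polys: "finite (monic_polys k :: 'a::{finite,field} poly set)"
  by (induction k) (simp_all add: monic_polys_Suc card_image[OF inj_on_pCons] card_cartesian_product)

lemma finite_degree_le: "finite {p :: 'a::{finite,zero} poly. P p \<and> degree p \<le> k}"
  by (rule finite_subset[OF _ finite_polys_below[of "Suc k"]]) (auto simp: polys_below_def)

definition residues :: "'a::zero poly \<Rightarrow> 'a poly set" where
  "residues M = polys_below (degree M)"

lemma card_residues: "card (residues (M :: 'a::{finite,zero} poly)) = CARD('a) ^ degree M"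
  and finite_residues: "finite (residues (M :: 'a::{finite,zero} poly))"
  by (simp_all add: residues_def card_polys_below finite_polys_below)

lemma mod_in_residues: "(M :: 'a::field poly) \<noteq> 0 \<Longrightarrow> r mod M \<in> residues M"
  using degree_mod_less[of M r] by (auto simp: residues_def polys_below_def)

lemma mod_residue: "r \<in> residues (M :: 'a::field poly) \<Longrightarrow> r mod M = r"
  by (auto simp: residues_def polys_below_def mod_poly_less)

lemma diff_in_residues: "r \<in> residues (M :: 'a::field poly) \<Longrightarrow> s \<in> residues M \<Longrightarrow> r - s \<in> residues M"
  using degree_diff_le_max[of r s] by (auto simp: residues_def polys_below_def)

lemma degree_mult_add_residue:
  fixes M k r :: "'a::field poly"
  assumes "M \<noteq> 0" "k \<noteq> 0" "r \<in> residues M"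
  shows "degree (M * k + r) = degree M + degree k
    \<and> lead_coeff (M * k + r) = lead_coeff M * lead_coeff k"
proof (cases "r = 0")
  case False
  with assms have "degree r < degree (M * k)"
    by (auto simp: residues_def polys_below_def degree_mult_eq)
  then have "degree (M * k + r) = degree (M * k) \<and> lead_coeff (M * k + r) = lead_coeff (M * k)"
    using lead_coeff_add_le[of r "M * k"] degree_add_eq_right[of r "M * k"] by (simp add: add.commute)
  with assms show ?thesis by (metis degree_mult_eq lead_coeff_mult)
qed (use assms in \<open>metis add_0_right degree_mult_eq lead_coeff_mult\<close>)

lemma monic_polys_mod_eq:
  fixes M r :: "'a::field poly"
  assumes M: "lead_coeff M = 1" and "degree M \<le> n" and r: "r \<in> residues M"
  shows "{h \<in> monic_polys n. h mod M = r} = (\<lambda>k. M * k + r) ` monic_polys (n - degree M)"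
proof (intro set_eqI iffI)
  fix h
  assume h: "h \<in> {h \<in> monic_polys n. h mod M = r}"
  define k where "k = h div M"
  have hk: "h = M * k + r"
    using h div_mult_mod_eq[of h M] by (simp add: k_def mult.commute)
  have "k \<noteq> 0"
  proof
    assume "k = 0"
    then have "h \<in> residues M" using hk r by simp
    with h assms show False by (auto simp: monic_polys_def residues_def polys_below_def)
  qed
  moreover have "M \<noteq> 0" using M by auto
  ultimately have "k \<in> monic_polys (n - degree M)"
    using h hk M degree_mult_add_residue[OF _ _ r, of k] by (auto simp: monic_polys_def)
  with hk show "h \<in> (\<lambda>k. M * k + r) ` monic_polys (n - degree M)" by blast
next
  fix h
  assume "h \<in> (\<lambda>k. M * k + r) ` monic_polys (n - degree M)"
  then obtain k where k: "k \<in> monic_polys (n - degree M)" and hk: "h = M * k + r" by blast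
  have "k \<noteq> 0" "M \<noteq> 0" using k M by (auto simp: monic_polys_def)
  then have "degree h = n \<and> lead_coeff h = 1"
    using degree_mult_add_residue[OF _ _ r, of k] k assms(1,2) by (auto simp: hk monic_polys_def)
  then have "h \<in> monic_polys n" unfolding monic_polys_def by blast
  moreover have "h mod M = r"
    using mod_residue[OF r] by (simp add: hk)
  ultimately show "h \<in> {h \<in> monic_polys n. h mod M = r}" by blast
qed

lemma card_monic_polys_mod_eq:
  fixes M r :: "'a::{finite,field} poly"
  assumes "lead_coeff M = 1" "degree M \<le> n" "r \<in> residues M"
  shows "card {h \<in> monic_polys n. h mod M = r} = CARD('a) ^ (n - degree M)"
proof -
  have "inj_on (\<lambda>k. M * k + r) (monic_polys (n - degree M))"
    using assms(1) by (auto simp: inj_on_def)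
  then show ?thesis
    by (simp add: monic_polys_mod_eq[OF assms] card_image card_monic_polys)
qed

lemma sum_monic_polys_mod:
  fixes M :: "'a::{finite,field} poly" and \<phi> :: "'a poly \<Rightarrow> real"
  assumes "lead_coeff M = 1" "degree M \<le> n"
  shows "(\<Sum>h\<in>monic_polys n. \<phi> (h mod M)) = real CARD('a) ^ (n - degree M) * (\<Sum>r\<in>residues M. \<phi> r)"
proof -
  have "(\<Sum>h\<in>monic_polys n. \<phi> (h mod M))
      = (\<Sum>r\<in>residues M. \<Sum>h\<in>{h \<in> monic_polys n. h mod M = r}. \<phi> (h mod M))"
    using assms(1) mod_in_residues[of M] leading_coeff_0_iff[of M]
    by (intro sum.group[symmetric]) (auto simp: finite_monic_polys finite_residues)
  also have "\<dots> = (\<Sum>r\<in>residues M. real CARD('a) ^ (n - degree M) * \<phi> r)"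
    by (intro sum.cong refl) (simp add: card_monic_polys_mod_eq[OF assms])
  finally show ?thesis by (simp add: sum_distrib_left)
qed

section \<open>Monic irreducibles and unique factorisation\<close>

definition monic_irreducible :: "'a::field poly \<Rightarrow> bool" where
  "monic_irreducible p \<longleftrightarrow> lead_coeff p = 1 \<and> irreducible p"

definition prime_divisors :: "'a::field poly \<Rightarrow> 'a poly set" where
  "prime_divisors a = {p. monic_irreducible p \<and> p dvd a}"

lemma monic_irreducible_nonzero: "monic_irreducible p \<Longrightarrow> p \<noteq> 0"
  by (auto simp: monic_irreducible_def)

lemma monic_irreducible_degree: "monic_irreducible p \<Longrightarrow> degree p \<ge> 1"
  using is_unit_iff_degree[of p] by (auto simp: monic_irreducible_def irreducible_def)

lemma card_field_ge_two: "CARD('a::{finite,field}) \<ge> 2"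
proof -
  have "card {0 :: 'a, 1} \<le> CARD('a)" by (rule card_mono) simp_all
  then show ?thesis by simp
qed

lemma poly_abs_ge_two:
  fixes p :: "'a::{finite,field} poly"
  assumes "monic_irreducible p"
  shows "poly_abs p \<ge> 2"
proof -
  have "CARD('a) ^ 1 \<le> CARD('a) ^ degree p"
    using card_field_ge_two[where 'a = 'a] monic_irreducible_degree[OF assms]
    by (intro power_increasing) simp_all
  then have "2 \<le> CARD('a) ^ degree p" using card_field_ge_two[where 'a = 'a] by simp
  then have "real 2 \<le> real (CARD('a) ^ degree p)" by (rule of_nat_mono)
  then show ?thesis by (simp add: poly_abs_def)
qed

lemma irreducible_dvd_mult_iff: "irreducible (p :: 'a::field poly) \<Longrightarrow> p dvd a * b \<longleftrightarrow> p dvd a \<or> p dvd b"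
  by (simp add: field_poly_irreducible_imp_prime prime_elem_dvd_mult_iff)

lemma irreducible_not_dvd_irreducible_of_degree_less:
  fixes p h :: "'a::field poly"
  assumes "irreducible h" "irreducible p" "degree p < degree h"
  shows "\<not> p dvd h"
proof
  assume "p dvd h"
  then obtain k where hk: "h = p * k" by (elim dvdE)
  from assms(1) this have "is_unit p \<or> is_unit k" by (rule irreducibleD)
  then have "is_unit k" using assms(2) by (auto simp: irreducible_not_unit)
  moreover have "p \<noteq> 0" "k \<noteq> 0" using hk assms(1) by auto
  ultimately have "degree h = degree p"
    by (simp add: hk is_unit_iff_degree degree_mult_eq)
  with assms(3) show False by simp
qed

lemma monic_irreducible_dvd_imp_eq:
  fixes p q :: "'a::field poly"
  assumes p: "monic_irreducible p" and q: "monic_irreducible q" and "p dvd q"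
  shows "p = q"
proof -
  obtain k where qk: "q = p * k" using \<open>p dvd q\<close> by (elim dvdE)
  then have "is_unit p \<or> is_unit k"
    using q by (intro irreducibleD) (simp_all add: monic_irreducible_def)
  then have "is_unit k" using p by (auto simp: monic_irreducible_def irreducible_not_unit)
  then obtain c where "k = [:c:]" by (auto simp: is_unit_poly_iff)
  moreover have "lead_coeff k = 1"
    using p q by (simp add: qk lead_coeff_mult monic_irreducible_def)
  ultimately show ?thesis by (simp add: qk)
qed

lemma monic_irreducible_dvd_prod_power:
  fixes p :: "'a::field poly"
  assumes "finite D" "\<forall>q\<in>D. monic_irreducible q" "monic_irreducible p"
    and "p dvd (\<Prod>q\<in>D. q ^ e q)"
  shows "p \<in> D \<and> e p \<noteq> 0"
  using assms(1,2,4)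
proof (induction D rule: finite_induct)
  case empty
  with assms(3) show ?case
    by (auto simp: monic_irreducible_def irreducible_not_unit)
next
  case (insert q D)
  have irr: "irreducible p" using assms(3) by (simp add: monic_irreducible_def)
  from insert.hyps insert.prems(2) have "p dvd q ^ e q \<or> p dvd (\<Prod>q\<in>D. q ^ e q)"
    by (simp add: irreducible_dvd_mult_iff[OF irr])
  then show ?case
  proof
    assume "p dvd q ^ e q"
    moreover from this have "e q \<noteq> 0"
      using irr irreducible_not_unit by (metis power_0)
    ultimately have "p = q" "e q \<noteq> 0"
      using insert.prems assms(3) field_poly_irreducible_imp_prime[OF irr]
      by (auto intro: monic_irreducible_dvd_imp_eq dest: prime_elem_dvd_power)
    then show ?thesis by simp
  qed (use insert in auto)
qed

lemma monic_irreducible_dvd_prod: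
  fixes p :: "'a::field poly"
  assumes "finite U" "\<forall>q\<in>U. monic_irreducible q" "monic_irreducible p" "p dvd \<Prod>U"
  shows "p \<in> U"
  using monic_irreducible_dvd_prod_power[OF assms(1-3), of "\<lambda>_. 1"] assms(4) by simp

lemma dvd_prod_power_iff:
  fixes D :: "'a::field poly set"
  assumes "finite D" "\<forall>q\<in>D. monic_irreducible q" "p \<in> D"
  shows "p dvd (\<Prod>q\<in>D. q ^ e q) \<longleftrightarrow> e p \<noteq> 0"
proof
  assume "e p \<noteq> 0"
  then have "p dvd p ^ e p" by simp
  also have "\<dots> dvd (\<Prod>q\<in>D. q ^ e q)" using assms(1,3) by (rule dvd_prodI)
  finally show "p dvd (\<Prod>q\<in>D. q ^ e q)" .
qed (use monic_irreducible_dvd_prod_power assms in blast)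

lemma prod_power_eq_imp_eq:
  fixes D :: "'a::field poly set"
  assumes "finite D" "\<forall>q\<in>D. monic_irreducible q"
    and eq: "(\<Prod>q\<in>D. q ^ e q) = (\<Prod>q\<in>D. q ^ e' q)" and "p \<in> D"
  shows "e p = e' p"
proof -
  have "\<not> e p < e' p" if eq: "(\<Prod>q\<in>D. q ^ e q) = (\<Prod>q\<in>D. q ^ e' q)" for e e'
  proof
    assume lt: "e p < e' p"
    define X where "X = (\<lambda>e. \<Prod>q\<in>D - {p}. q ^ e q)"
    have factor_p: "(\<Prod>q\<in>D. q ^ e q) = p ^ e p * X e" for e
      using assms(1,4) by (simp add: X_def prod.remove)
    have "p ^ e p * X e = p ^ e p * (p ^ (e' p - e p) * X e')"
      using eq lt by (simp add: factor_p mult.assoc[symmetric] power_add[symmetric])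
    moreover have "p \<noteq> 0" using monic_irreducible_nonzero assms(2,4) by blast
    ultimately have "X e = p ^ (e' p - e p) * X e'" by simp
    then have "p dvd X e" using lt by simp
    then show False
      using monic_irreducible_dvd_prod_power[of "D - {p}" p e] assms(1,2,4) by (auto simp: X_def)
  qed
  from this[OF eq] this[OF eq[symmetric]] show ?thesis by simp
qed

lemma monic_reducible_factors:
  fixes a :: "'a::field poly"
  assumes a: "lead_coeff a = 1" "\<not> is_unit a" "\<not> irreducible a"
  obtains b c where "a = b * c" "lead_coeff b = 1" "lead_coeff c = 1"
    "degree b < degree a" "degree c < degree a"
proof -
  from a obtain b c where abc: "a = b * c" and b: "\<not> is_unit b" and c: "\<not> is_unit c"
    by (auto simp: irreducible_def)
  define u where "u = lead_coeff b"
  have "b \<noteq> 0" "c \<noteq> 0" using abc a(1) by auto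
  then have u: "u \<noteq> 0" and "degree b \<ge> 1" "degree c \<ge> 1"
    using b c by (auto simp: u_def is_unit_iff_degree)
  then have "degree (smult (inverse u) b) < degree a" "degree (smult u c) < degree a"
    using \<open>b \<noteq> 0\<close> \<open>c \<noteq> 0\<close> by (simp_all add: abc degree_mult_eq)
  moreover have "a = smult (inverse u) b * smult u c" using u by (simp add: abc)
  moreover have "lead_coeff (smult (inverse u) b) = 1" using u by (simp add: u_def)
  moreover from calculation have "lead_coeff (smult u c) = 1"
    using a(1) by (metis lead_coeff_mult mult_1)
  ultimately show ?thesis using that by blast
qed

lemma monic_eq_prod_power:
  fixes a :: "'a::field poly"
  assumes "lead_coeff a = 1" "finite D" "\<forall>q\<in>D. monic_irreducible q"
    and "prime_divisors a \<subseteq> D"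
  shows "\<exists>e. a = (\<Prod>q\<in>D. q ^ e q)"
  using assms(1,4)
proof (induction "degree a" arbitrary: a rule: less_induct)
  case less
  consider "is_unit a" | "irreducible a" | "\<not> is_unit a" "\<not> irreducible a" by blast
  then show ?case
  proof cases
    case 1
    then have "a = 1" using less.prems(1) by (auto simp: is_unit_poly_iff)
    then show ?thesis by (intro exI[of _ "\<lambda>_. 0"]) simp
  next
    case 2
    then have "a \<in> D"
      using less.prems by (auto simp: prime_divisors_def monic_irreducible_def)
    moreover have "(\<Prod>q\<in>D. q ^ (if q = a then 1 else 0)) = (\<Prod>q\<in>D. if q = a then q else 1)"
      by (rule prod.cong) auto
    ultimately show ?thesis
      using assms(2) by (intro exI[of _ "\<lambda>q. if q = a then 1 else 0"]) simp
  next
    case 3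
    with less.prems(1) obtain b c where a: "a = b * c" and b: "lead_coeff b = 1" "degree b < degree a"
      and c: "lead_coeff c = 1" "degree c < degree a"
      by (rule monic_reducible_factors)
    have "prime_divisors b \<subseteq> D" "prime_divisors c \<subseteq> D"
      using less.prems(2) by (auto simp: a prime_divisors_def)
    with b c obtain eb ec where "b = (\<Prod>q\<in>D. q ^ eb q)" "c = (\<Prod>q\<in>D. q ^ ec q)"
      using less.hyps by metis
    then show ?thesis
      by (intro exI[of _ "\<lambda>q. eb q + ec q"]) (simp add: a power_add prod.distrib)
  qed
qed

lemma degree_prod_power:
  fixes D :: "'a::field poly set"
  assumes "\<forall>q\<in>D. q \<noteq> 0"
  shows "degree (\<Prod>q\<in>D. q ^ e q) = (\<Sum>q\<in>D. e q * degree q)"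
  using assms by (simp add: degree_prod_sum_eq degree_power_eq)

lemma exponent_le_degree_prod_power:
  fixes D :: "'a::field poly set"
  assumes "finite D" "\<forall>q\<in>D. monic_irreducible q" "p \<in> D"
  shows "e p \<le> degree (\<Prod>q\<in>D. q ^ e q)"
proof -
  have "degree p \<ge> 1" using monic_irreducible_degree assms(2,3) by blast
  then have "e p \<le> e p * degree p" by simp
  also have "\<dots> \<le> (\<Sum>q\<in>D. e q * degree q)" using assms(1,3) by (intro member_le_sum) auto
  finally show ?thesis using assms(2) by (simp add: degree_prod_power monic_irreducible_nonzero)
qed

lemma poly_abs_prod_power:
  fixes D :: "'a::{finite,field} poly set"
  assumes "\<forall>q\<in>D. q \<noteq> 0"
  shows "poly_abs (\<Prod>q\<in>D. q ^ e q) = (\<Prod>q\<in>D. poly_abs q ^ e q)"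
proof -
  have "poly_abs (\<Prod>q\<in>D. q ^ e q) = (\<Prod>q\<in>D. real CARD('a) ^ (degree q * e q))"
    using assms by (simp add: poly_abs_def degree_prod_power power_sum mult.commute)
  then show ?thesis by (simp add: poly_abs_def power_mult)
qed

lemma finite_prime_divisors: "(a :: 'a::{finite,field} poly) \<noteq> 0 \<Longrightarrow> finite (prime_divisors a)"
  by (rule finite_subset[OF _ finite_degree_le[of "\<lambda>p. p dvd a" "degree a"]])
     (auto simp: prime_divisors_def dvd_imp_degree_le)

lemma sum_degree_prime_divisors_le:
  fixes a :: "'a::{finite,field} poly"
  assumes "lead_coeff a = 1"
  shows "(\<Sum>p\<in>prime_divisors a. degree p) \<le> degree a"
proof -
  define D where "D = prime_divisors a"
  have "a \<noteq> 0" using assms by auto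
  then have fin: "finite D" by (simp add: D_def finite_prime_divisors)
  have mi: "\<forall>q\<in>D. monic_irreducible q" by (simp add: D_def prime_divisors_def)
  obtain e where a: "a = (\<Prod>q\<in>D. q ^ e q)"
    using monic_eq_prod_power[OF assms fin mi] by (auto simp: D_def)
  have "e p \<noteq> 0" if "p \<in> D" for p
  proof -
    from that have "monic_irreducible p" "p dvd a" by (simp_all add: D_def prime_divisors_def)
    then show ?thesis using monic_irreducible_dvd_prod_power[OF fin mi, of p e] a by simp
  qed
  then have "(\<Sum>p\<in>D. degree p) \<le> (\<Sum>p\<in>D. e p * degree p)"
    by (intro sum_mono) (simp add: Suc_le_eq)
  also have "\<dots> = degree a"
    using mi by (simp add: a degree_prod_power monic_irreducible_nonzero)
  finally show ?thesis by (simp add: D_def)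
qed

section \<open>Chinese remainder theorem\<close>

lemma residues_mult_bij:
  fixes p M :: "'a::{finite,field} poly"
  assumes "p \<noteq> 0" "M \<noteq> 0" and coprime: "\<And>r. p dvd r \<Longrightarrow> M dvd r \<Longrightarrow> p * M dvd r"
  shows "bij_betw (\<lambda>r. (r mod p, r mod M)) (residues (p * M)) (residues p \<times> residues M)"
proof -
  have inj: "inj_on (\<lambda>r. (r mod p, r mod M)) (residues (p * M))"
  proof (rule inj_onI)
    fix r s
    assume r: "r \<in> residues (p * M)" and s: "s \<in> residues (p * M)"
      and "(r mod p, r mod M) = (s mod p, s mod M)"
    then have "p * M dvd r - s" by (intro coprime) (auto simp: mod_eq_dvd_iff)
    moreover have "r - s \<in> residues (p * M)" using diff_in_residues[OF r s] .
    ultimately have "r - s = 0"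
      by (auto simp: residues_def polys_below_def dest: dvd_imp_degree_le)
    then show "r = s" by simp
  qed
  moreover have "(\<lambda>r. (r mod p, r mod M)) ` residues (p * M) \<subseteq> residues p \<times> residues M"
    using assms(1,2) mod_in_residues by auto
  moreover have "card (residues (p * M)) = card (residues p \<times> residues M)"
    using assms(1,2) by (simp add: card_residues card_cartesian_product degree_mult_eq power_add)
  ultimately show ?thesis
    by (simp add: bij_betw_def card_image card_subset_eq finite_residues)
qed

lemma sum_residues_prod_mod:
  fixes U :: "'a::{finite,field} poly set" and \<phi> :: "'a poly \<Rightarrow> 'a poly \<Rightarrow> real"
  assumes "finite U" "\<forall>p\<in>U. monic_irreducible p"
  shows "(\<Sum>r\<in>residues (\<Prod>U). \<Prod>p\<in>U. \<phi> p (r mod p)) = (\<Prod>p\<in>U. \<Sum>a\<in>residues p. \<phi> p a)"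
  using assms
proof (induction U rule: finite_induct)
  case empty
  then show ?case by (simp add: residues_def)
next
  case (insert p U)
  define M where "M = \<Prod>U"
  have p: "monic_irreducible p" and U: "\<forall>q\<in>U. monic_irreducible q" using insert.prems by auto
  have "lead_coeff M = 1" using U by (simp add: M_def lead_coeff_prod monic_irreducible_def)
  then have M0: "M \<noteq> 0" by auto
  have "\<not> p dvd M"
    using monic_irreducible_dvd_prod[OF insert.hyps(1) U p] insert.hyps(2) by (auto simp: M_def)
  then have coprime: "p * M dvd r" if "p dvd r" "M dvd r" for r
  proof -
    from that(2) obtain s where r: "r = M * s" by (elim dvdE)
    with that(1) \<open>\<not> p dvd M\<close> p have "p dvd s"
      by (simp add: monic_irreducible_def irreducible_dvd_mult_iff)
    from mult_dvd_mono[OF this dvd_refl[of M]] show ?thesis by (simp add: r mult.commute)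
  qed
  have "(\<Sum>r\<in>residues (\<Prod>(insert p U)). \<Prod>q\<in>insert p U. \<phi> q (r mod q))
      = (\<Sum>r\<in>residues (p * M). \<phi> p (r mod p) * (\<Prod>q\<in>U. \<phi> q (r mod M mod q)))"
    using insert.hyps by (simp add: M_def mod_mod_cancel dvd_prod_eqI)
  also have "\<dots> = (\<Sum>(a, b)\<in>residues p \<times> residues M. \<phi> p a * (\<Prod>q\<in>U. \<phi> q (b mod q)))"
    using sum.reindex_bij_betw[OF residues_mult_bij[OF monic_irreducible_nonzero[OF p] M0 coprime],
        of "\<lambda>(a, b). \<phi> p a * (\<Prod>q\<in>U. \<phi> q (b mod q))"]
    by simp
  also have "\<dots> = (\<Sum>a\<in>residues p. \<phi> p a) * (\<Sum>b\<in>residues M. \<Prod>q\<in>U. \<phi> q (b mod q))"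
    by (simp add: sum.cartesian_product[symmetric] sum_product)
  finally show ?case using insert U by (simp add: M_def)
qed

lemma sum_monic_polys_prod_mod:
  fixes U :: "'a::{finite,field} poly set" and \<phi> :: "'a poly \<Rightarrow> 'a poly \<Rightarrow> real"
  assumes "finite U" "\<forall>p\<in>U. monic_irreducible p" "(\<Sum>p\<in>U. degree p) \<le> n"
  shows "(\<Sum>h\<in>monic_polys n. \<Prod>p\<in>U. \<phi> p (h mod p))
       = real CARD('a) ^ (n - (\<Sum>p\<in>U. degree p)) * (\<Prod>p\<in>U. \<Sum>a\<in>residues p. \<phi> p a)"
proof -
  define M where "M = \<Prod>U"
  have M1: "lead_coeff M = 1"
    using assms(2) by (simp add: M_def lead_coeff_prod monic_irreducible_def)
  have M2: "degree M = (\<Sum>p\<in>U. degree p)"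
    using assms(2) by (simp add: M_def degree_prod_sum_eq monic_irreducible_nonzero)
  have "(\<Sum>h\<in>monic_polys n. \<Prod>p\<in>U. \<phi> p (h mod p))
      = (\<Sum>h\<in>monic_polys n. (\<lambda>r. \<Prod>p\<in>U. \<phi> p (r mod p)) (h mod M))"
    using assms(1) by (simp add: M_def mod_mod_cancel dvd_prod_eqI)
  also have "\<dots> = real CARD('a) ^ (n - degree M) * (\<Sum>r\<in>residues M. \<Prod>p\<in>U. \<phi> p (r mod p))"
    using M1 M2 assms(3) by (intro sum_monic_polys_mod) simp_all
  finally show ?thesis using sum_residues_prod_mod[OF assms(1,2)] M2 by (simp add: M_def)
qed

section \<open>The Selberg sieve\<close>

definition sieve_density :: "('a::{finite,field} poly \<Rightarrow> 'a poly set) \<Rightarrow> 'a poly \<Rightarrow> real" where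
  "sieve_density \<Omega> p = real (card (\<Omega> p)) / poly_abs p"

lemma sieve_density_nonneg: "sieve_density \<Omega> p \<ge> 0"
  by (simp add: sieve_density_def poly_abs_def)

definition centered_indicator ::
    "('a::{finite,field} poly \<Rightarrow> 'a poly set) \<Rightarrow> 'a poly \<Rightarrow> 'a poly \<Rightarrow> real" where
  "centered_indicator \<Omega> p a = of_bool (a \<in> \<Omega> p) - sieve_density \<Omega> p"

lemma sum_centered_indicator:
  assumes "\<Omega> p \<subseteq> residues p"
  shows "(\<Sum>a\<in>residues p. centered_indicator \<Omega> p a) = 0"
  using assms finite_residues[of p]
  by (simp add: centered_indicator_def sum_subtractf sieve_density_def card_residues poly_abs_def
      Int_absorb1 flip: sum.inter_filter)

lemma sum_centered_indicator_square:
  assumes "\<Omega> p \<subseteq> residues p"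
  shows "(\<Sum>a\<in>residues p. centered_indicator \<Omega> p a ^ 2)
       = poly_abs p * (sieve_density \<Omega> p * (1 - sieve_density \<Omega> p))"
proof -
  define g where "g = sieve_density \<Omega> p"
  have "centered_indicator \<Omega> p a ^ 2 = (1 - 2 * g) * of_bool (a \<in> \<Omega> p) + g ^ 2" for a
    by (simp add: centered_indicator_def g_def power2_eq_square algebra_simps)
  then have "(\<Sum>a\<in>residues p. centered_indicator \<Omega> p a ^ 2)
      = (1 - 2 * g) * real (card (\<Omega> p)) + poly_abs p * g ^ 2"
    using assms finite_residues[of p]
    by (simp add: sum.distrib flip: sum_distrib_left)
       (simp add: card_residues poly_abs_def Int_absorb1 flip: sum.inter_filter)
  also have "\<dots> = poly_abs p * (g * (1 - g))"
    by (simp add: g_def sieve_density_def poly_abs_def field_simps power2_eq_square)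
  finally show ?thesis by (simp add: g_def)
qed

definition sieve_weight ::
    "('a::{finite,field} poly \<Rightarrow> 'a poly set) \<Rightarrow> 'a poly set \<Rightarrow> 'a poly \<Rightarrow> real" where
  "sieve_weight \<Omega> c h = (\<Prod>p\<in>c. centered_indicator \<Omega> p (h mod p))"

lemma prod_if_subset: "finite A \<Longrightarrow> B \<subseteq> A \<Longrightarrow> (\<Prod>x\<in>A. if x \<in> B then f x else 1) = prod f B"
  by (simp add: prod.If_cases Int_absorb1)

lemma sieve_weight_orthogonal:
  fixes c c' :: "'a::{finite,field} poly set"
  assumes fin: "finite c" "finite c'"
    and \<Omega>: "\<forall>p\<in>c \<union> c'. monic_irreducible p \<and> \<Omega> p \<subseteq> residues p"
    and deg: "(\<Sum>p\<in>c \<union> c'. degree p) \<le> n"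
  shows "(\<Sum>h\<in>monic_polys n. sieve_weight \<Omega> c h * sieve_weight \<Omega> c' h)
       = (if c = c' then real CARD('a) ^ n * (\<Prod>p\<in>c. sieve_density \<Omega> p * (1 - sieve_density \<Omega> p))
          else 0)"
proof -
  define U where "U = c \<union> c'"
  define \<phi> where "\<phi> p a = (if p \<in> c then centered_indicator \<Omega> p a else 1)
    * (if p \<in> c' then centered_indicator \<Omega> p a else 1)" for p a
  have U: "finite U" "\<forall>p\<in>U. monic_irreducible p" using fin \<Omega> by (auto simp: U_def)
  have "sieve_weight \<Omega> c h * sieve_weight \<Omega> c' h = (\<Prod>p\<in>U. \<phi> p (h mod p))" for h
    using U(1) by (simp add: \<phi>_def prod.distrib sieve_weight_def prod_if_subset U_def)
  then have "(\<Sum>h\<in>monic_polys n. sieve_weight \<Omega> c h * sieve_weight \<Omega> c' h)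
      = real CARD('a) ^ (n - (\<Sum>p\<in>U. degree p)) * (\<Prod>p\<in>U. \<Sum>a\<in>residues p. \<phi> p a)"
    using sum_monic_polys_prod_mod[OF U] deg by (simp add: U_def)
  also have "\<dots> = (if c = c'
      then real CARD('a) ^ n * (\<Prod>p\<in>c. sieve_density \<Omega> p * (1 - sieve_density \<Omega> p)) else 0)"
  proof (cases "c = c'")
    case True
    have "(\<Prod>p\<in>U. \<Sum>a\<in>residues p. \<phi> p a)
        = (\<Prod>p\<in>c. poly_abs p * (sieve_density \<Omega> p * (1 - sieve_density \<Omega> p)))"
      using \<Omega> by (intro prod.cong) (auto simp: U_def True \<phi>_def power2_eq_square
          simp flip: sum_centered_indicator_square)
    also have "\<dots> = real CARD('a) ^ (\<Sum>p\<in>c. degree p)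
        * (\<Prod>p\<in>c. sieve_density \<Omega> p * (1 - sieve_density \<Omega> p))"
      by (simp add: prod.distrib poly_abs_def power_sum)
    finally show ?thesis
      using True deg by (simp add: U_def power_add[symmetric])
  next
    case False
    then obtain p where p: "p \<in> U" "p \<in> c \<longleftrightarrow> p \<notin> c'" by (auto simp: U_def)
    then have "(\<Sum>a\<in>residues p. \<phi> p a) = 0"
      using \<Omega> sum_centered_indicator[of \<Omega> p] by (auto simp: \<phi>_def U_def)
    then show ?thesis using False p U(1) by (auto simp: prod_zero)
  qed
  finally show ?thesis .
qed

lemma sum_sieve_combination_square:
  fixes S :: "'a::{finite,field} poly set" and C :: "'a poly set set"
    and \<Omega> :: "'a poly \<Rightarrow> 'a poly set"
  defines "g \<equiv> sieve_density \<Omega>"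
  assumes S: "\<forall>p\<in>S. monic_irreducible p \<and> \<Omega> p \<subseteq> residues p \<and> g p < 1"
    and C: "finite C" "\<forall>c\<in>C. finite c \<and> c \<subseteq> S" "\<forall>c\<in>C. \<forall>c'\<in>C. (\<Sum>p\<in>c \<union> c'. degree p) \<le> n"
  shows "(\<Sum>h\<in>monic_polys n. (\<Sum>c\<in>C. (\<Prod>p\<in>c. - 1 / (1 - g p)) * sieve_weight \<Omega> c h) ^ 2)
    = real CARD('a) ^ n * (\<Sum>c\<in>C. \<Prod>p\<in>c. g p / (1 - g p))"
proof -
  define w where "w c = (\<Prod>p\<in>c. - 1 / (1 - g p))" for c
  have c: "finite c" "c \<subseteq> S" if "c \<in> C" for c using C(2) that by auto
  have "(\<Sum>h\<in>monic_polys n. (\<Sum>c\<in>C. w c * sieve_weight \<Omega> c h) ^ 2)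
      = (\<Sum>c\<in>C. \<Sum>c'\<in>C. w c * w c' * (\<Sum>h\<in>monic_polys n. sieve_weight \<Omega> c h * sieve_weight \<Omega> c' h))"
    by (simp add: power2_eq_square sum_product sum_distrib_left sum.swap[of _ "monic_polys n"] mult_ac)
  also have "\<dots> = (\<Sum>c\<in>C. w c ^ 2 * real CARD('a) ^ n * (\<Prod>p\<in>c. g p * (1 - g p)))"
  proof (intro sum.cong refl)
    fix c assume "c \<in> C"
    have "w c * w c' * (\<Sum>h\<in>monic_polys n. sieve_weight \<Omega> c h * sieve_weight \<Omega> c' h)
        = (if c' = c then w c ^ 2 * real CARD('a) ^ n * (\<Prod>p\<in>c. g p * (1 - g p)) else 0)"
      if "c' \<in> C" for c'
      using c[OF \<open>c \<in> C\<close>] c[OF that] S C(3) \<open>c \<in> C\<close> that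
      by (subst sieve_weight_orthogonal) (auto simp: g_def power2_eq_square)
    then show "(\<Sum>c'\<in>C. w c * w c' * (\<Sum>h\<in>monic_polys n. sieve_weight \<Omega> c h * sieve_weight \<Omega> c' h))
        = w c ^ 2 * real CARD('a) ^ n * (\<Prod>p\<in>c. g p * (1 - g p))"
      using C(1) \<open>c \<in> C\<close> by simp
  qed
  also have "\<dots> = real CARD('a) ^ n * (\<Sum>c\<in>C. \<Prod>p\<in>c. g p / (1 - g p))"
  proof -
    have "w c ^ 2 * (\<Prod>p\<in>c. g p * (1 - g p)) = (\<Prod>p\<in>c. g p / (1 - g p))" if "c \<in> C" for c
      using S c[OF that]
      by (auto simp: w_def power2_eq_square power_divide simp flip: prod.distrib intro!: prod.cong)
    then show ?thesis by (simp add: sum_distrib_left mult_ac)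
  qed
  finally show ?thesis by (simp add: w_def)
qed

theorem selberg_sieve:
  fixes S :: "'a::{finite,field} poly set" and C :: "'a poly set set"
    and \<Omega> :: "'a poly \<Rightarrow> 'a poly set"
  defines "g \<equiv> sieve_density \<Omega>"
  assumes S: "finite S" "\<forall>p\<in>S. monic_irreducible p \<and> \<Omega> p \<subseteq> residues p \<and> g p < 1"
    and C: "C \<subseteq> Pow S" "{} \<in> C" "\<forall>c\<in>C. \<forall>c'\<in>C. (\<Sum>p\<in>c \<union> c'. degree p) \<le> n"
  shows "real (card {h \<in> monic_polys n. \<forall>p\<in>S. h mod p \<notin> \<Omega> p}) * (\<Sum>c\<in>C. \<Prod>p\<in>c. g p / (1 - g p))
    \<le> real CARD('a) ^ n"
proof -
  define T where "T = {h \<in> monic_polys n. \<forall>p\<in>S. h mod p \<notin> \<Omega> p}"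
  define G where "G = (\<Sum>c\<in>C. \<Prod>p\<in>c. g p / (1 - g p))"
  define v where "v h = (\<Sum>c\<in>C. (\<Prod>p\<in>c. - 1 / (1 - g p)) * sieve_weight \<Omega> c h)" for h
  have finC: "finite C" using C(1) S(1) by (rule finite_subset[OF _ finite_Pow_iff[THEN iffD2]])
  have c: "finite c \<and> c \<subseteq> S" if "c \<in> C" for c
    using that C(1) S(1) by (auto intro: finite_subset)
  have "G \<ge> 1"
  proof -
    have "(\<Sum>c\<in>C - {{}}. \<Prod>p\<in>c. g p / (1 - g p)) \<ge> 0"
      using c S(2) by (force simp: g_def sieve_density_nonneg intro!: sum_nonneg prod_nonneg)
    then show ?thesis using C(2) finC by (simp add: G_def sum.remove)
  qed
  have v_sifted: "v h = G" if "h \<in> T" for h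
  proof -
    have "(\<Prod>p\<in>c. - 1 / (1 - g p)) * sieve_weight \<Omega> c h = (\<Prod>p\<in>c. g p / (1 - g p))" if "c \<in> C" for c
      using \<open>h \<in> T\<close> c[OF that]
      by (auto simp: sieve_weight_def centered_indicator_def T_def g_def
          simp flip: prod.distrib intro!: prod.cong)
    then show ?thesis by (simp add: v_def G_def)
  qed
  have "real (card T) * G * G = (\<Sum>h\<in>T. v h ^ 2)"
    using v_sifted by (simp add: power2_eq_square)
  also have "\<dots> \<le> (\<Sum>h\<in>monic_polys n. v h ^ 2)"
    by (rule sum_mono2) (auto simp: T_def finite_monic_polys)
  also have "\<dots> = real CARD('a) ^ n * G"
    using sum_sieve_combination_square[OF S(2)[unfolded g_def] finC _ C(3)] c
    by (simp add: v_def G_def g_def)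
  finally have "real (card T) * G * G \<le> real CARD('a) ^ n * G" .
  with \<open>G \<ge> 1\<close> show ?thesis by (simp add: T_def G_def)
qed

section \<open>An Euler product\<close>

lemma sum_power_le_geometric:
  fixes x :: real
  assumes "0 \<le> x" "x < 1"
  shows "(\<Sum>i\<le>z. x ^ i) \<le> 1 / (1 - x)"
proof -
  have "(\<Sum>i\<le>z. x ^ i) = (1 - x ^ Suc z) / (1 - x)"
    using assms by (subst lessThan_Suc_atMost[symmetric], subst sum_gp_strict) simp_all
  also have "\<dots> \<le> 1 / (1 - x)" using assms by (simp add: divide_right_mono)
  finally show ?thesis .
qed

lemma sum_monic_polys_inverse_square:
  "(\<Sum>m\<in>(\<Union>d\<le>N. monic_polys d :: 'a::{finite,field} poly set). 1 / poly_abs m ^ 2)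
    \<le> 1 / (1 - 1 / real CARD('a))"
proof -
  define x where "x = 1 / real CARD('a)"
  have x: "0 \<le> x" "x < 1" using card_field_ge_two[where 'a = 'a] by (simp_all add: x_def)
  have "(\<Sum>m\<in>(\<Union>d\<le>N. monic_polys d :: 'a poly set). 1 / poly_abs m ^ 2)
      = (\<Sum>d\<le>N. \<Sum>m\<in>(monic_polys d :: 'a poly set). 1 / poly_abs m ^ 2)"
    by (rule sum.UNION_disjoint) (auto simp: finite_monic_polys, auto simp: monic_polys_def)
  also have "\<dots> = (\<Sum>d\<le>N. x ^ d)"
  proof (intro sum.cong refl)
    fix d
    have "(\<Sum>m\<in>(monic_polys d :: 'a poly set). 1 / poly_abs m ^ 2)
        = (\<Sum>m\<in>(monic_polys d :: 'a poly set). (1 / real CARD('a) ^ d) ^ 2)"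
      by (intro sum.cong) (auto simp: monic_polys_def poly_abs_def power_divide)
    then show "(\<Sum>m\<in>(monic_polys d :: 'a poly set). 1 / poly_abs m ^ 2) = x ^ d"
      by (simp add: x_def card_monic_polys power2_eq_square power_one_over)
  qed
  also have "\<dots> \<le> 1 / (1 - x)" using x by (rule sum_power_le_geometric)
  finally show ?thesis by (simp add: x_def)
qed

lemma prod_truncated_euler_le:
  fixes F :: "'a::{finite,field} poly set"
  assumes fin: "finite F" and mi: "\<forall>p\<in>F. monic_irreducible p"
  shows "(\<Prod>p\<in>F. \<Sum>k<K. (1 / poly_abs p ^ 2) ^ k) \<le> 1 / (1 - 1 / real CARD('a))"
proof -
  define \<psi> where "\<psi> e = (\<Prod>p\<in>F. p ^ e p)" for e
  define E where "E = PiE F (\<lambda>_. {..<K})"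
  have abs: "poly_abs (\<psi> e) = (\<Prod>p\<in>F. poly_abs p ^ e p)" for e
    unfolding \<psi>_def by (rule poly_abs_prod_power) (use mi monic_irreducible_nonzero in auto)
  have "inj_on \<psi> E"
    using prod_power_eq_imp_eq[OF fin mi] by (auto simp: inj_on_def E_def \<psi>_def intro: PiE_ext)
  have img: "\<psi> ` E \<subseteq> (\<Union>d\<le>K * (\<Sum>p\<in>F. degree p). monic_polys d)"
  proof (rule image_subsetI)
    fix e assume e: "e \<in> E"
    have "degree (\<psi> e) = (\<Sum>p\<in>F. e p * degree p)"
      using mi by (simp add: \<psi>_def degree_prod_power monic_irreducible_nonzero)
    also have "\<dots> \<le> (\<Sum>p\<in>F. K * degree p)"
      using e by (intro sum_mono mult_le_mono1) (auto simp: E_def PiE_def Pi_def less_imp_le)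
    finally have "degree (\<psi> e) \<le> K * (\<Sum>p\<in>F. degree p)" by (simp add: sum_distrib_left)
    moreover have "lead_coeff (\<psi> e) = 1"
      using mi by (simp add: \<psi>_def lead_coeff_prod lead_coeff_power monic_irreducible_def)
    ultimately show "\<psi> e \<in> (\<Union>d\<le>K * (\<Sum>p\<in>F. degree p). monic_polys d)"
      by (auto simp: monic_polys_def)
  qed
  have "(\<Sum>m\<in>\<psi> ` E. 1 / poly_abs m ^ 2)
      \<le> (\<Sum>m\<in>(\<Union>d\<le>K * (\<Sum>p\<in>F. degree p). monic_polys d :: 'a poly set). 1 / poly_abs m ^ 2)"
    by (rule sum_mono2[OF _ img]) (simp_all add: finite_monic_polys poly_abs_def)
  also have "\<dots> \<le> 1 / (1 - 1 / real CARD('a))" by (rule sum_monic_polys_inverse_square)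
  finally have bound: "(\<Sum>m\<in>\<psi> ` E. 1 / poly_abs m ^ 2) \<le> 1 / (1 - 1 / real CARD('a))" .
  have "(1 / poly_abs p ^ 2) ^ k = 1 / (poly_abs p ^ k) ^ 2" for p :: "'a poly" and k
    by (simp add: power_divide flip: power_mult) (simp add: mult.commute)
  then have "(\<Prod>p\<in>F. \<Sum>k<K. (1 / poly_abs p ^ 2) ^ k) = (\<Sum>e\<in>E. 1 / poly_abs (\<psi> e) ^ 2)"
    using fin by (simp add: prod_sum_PiE E_def abs prod_dividef prod_power_distrib)
  also have "\<dots> = (\<Sum>m\<in>\<psi> ` E. 1 / poly_abs m ^ 2)"
    using \<open>inj_on \<psi> E\<close> by (simp add: sum.reindex)
  finally show ?thesis using bound by simp
qed

lemma prod_euler_factor_le: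
  fixes F :: "'a::{finite,field} poly set"
  assumes "finite F" "\<forall>p\<in>F. monic_irreducible p"
  shows "(\<Prod>p\<in>F. 1 / (1 - 1 / poly_abs p ^ 2)) \<le> 1 / (1 - 1 / real CARD('a))"
proof (rule LIMSEQ_le_const2)
  show "(\<lambda>K. \<Prod>p\<in>F. \<Sum>k<K. (1 / poly_abs p ^ 2) ^ k) \<longlonglongrightarrow> (\<Prod>p\<in>F. 1 / (1 - 1 / poly_abs p ^ 2))"
  proof (intro tendsto_prod)
    fix p assume "p \<in> F"
    then have "2 * 2 \<le> poly_abs p * poly_abs p"
      using assms(2) poly_abs_ge_two[of p] by (intro mult_mono) auto
    then have "norm (1 / poly_abs p ^ 2) < 1" by (simp add: power2_eq_square)
    from geometric_sums[OF this]
    show "(\<lambda>K. \<Sum>k<K. (1 / poly_abs p ^ 2) ^ k) \<longlonglongrightarrow> 1 / (1 - 1 / poly_abs p ^ 2)"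
      by (simp add: sums_def)
  qed
qed (use prod_truncated_euler_le[OF assms] in auto)

lemma prod_one_plus_inverse_pred_le:
  fixes F :: "'a::{finite,field} poly set"
  assumes "finite F" "\<forall>p\<in>F. monic_irreducible p"
  shows "(\<Prod>p\<in>F. 1 + 1 / (poly_abs p - 1)) \<le> (\<Prod>p\<in>F. 1 + 1 / poly_abs p) / (1 - 1 / real CARD('a))"
proof -
  have "1 + 1 / (poly_abs p - 1) = (1 + 1 / poly_abs p) * (1 / (1 - 1 / poly_abs p ^ 2))"
    if "p \<in> F" for p
  proof -
    have P: "poly_abs p \<ge> 2" using that assms(2) poly_abs_ge_two by blast
    have "1 - 1 / poly_abs p ^ 2 = (1 + 1 / poly_abs p) * (1 - 1 / poly_abs p)"
      by (simp add: algebra_simps power2_eq_square)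
    moreover have "1 + 1 / poly_abs p \<noteq> 0" using P by (simp add: field_simps)
    ultimately have "(1 + 1 / poly_abs p) * (1 / (1 - 1 / poly_abs p ^ 2)) = 1 / (1 - 1 / poly_abs p)"
      by simp
    also have "\<dots> = 1 + 1 / (poly_abs p - 1)" using P by (simp add: field_simps)
    finally show ?thesis ..
  qed
  then have "(\<Prod>p\<in>F. 1 + 1 / (poly_abs p - 1))
      = (\<Prod>p\<in>F. (1 + 1 / poly_abs p) * (1 / (1 - 1 / poly_abs p ^ 2)))"
    by (rule prod.cong[OF refl])
  also have "\<dots> = (\<Prod>p\<in>F. 1 + 1 / poly_abs p) * (\<Prod>p\<in>F. 1 / (1 - 1 / poly_abs p ^ 2))"
    by (rule prod.distrib)
  also have "\<dots> \<le> (\<Prod>p\<in>F. 1 + 1 / poly_abs p) * (1 / (1 - 1 / real CARD('a)))"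
    by (intro mult_left_mono prod_euler_factor_le assms prod_nonneg) (simp add: poly_abs_def)
  finally show ?thesis by simp
qed

section \<open>A lower bound for the sieve sum\<close>

definition monic_pairs :: "nat \<Rightarrow> ('a::{zero,one} poly \<times> 'a poly) set" where
  "monic_pairs z = {(a, b). lead_coeff a = 1 \<and> lead_coeff b = 1 \<and> degree a + degree b \<le> z}"

lemma finite_monic_pairs: "finite (monic_pairs z :: ('a::{finite,field} poly \<times> 'a poly) set)"
  by (rule finite_subset[of _ "{a. degree a \<le> z} \<times> {b. degree b \<le> z}"])
     (auto simp: monic_pairs_def finite_degree_le[where P = "\<lambda>_. True", simplified])

lemma sum_monic_pairs:
  "(\<Sum>(a, b)\<in>monic_pairs z. 1 / (poly_abs a * poly_abs (b :: 'a::{finite,field} poly)))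
    = real (z + 1) * real (z + 2) / 2"
proof -
  define P where "P j l = (monic_polys j \<times> monic_polys l :: ('a poly \<times> 'a poly) set)" for j l
  have pairs: "(monic_pairs z :: ('a poly \<times> 'a poly) set) = (\<Union>j\<le>z. \<Union>l\<le>z - j. P j l)"
    by (auto simp: monic_pairs_def monic_polys_def P_def)
  have "(\<Sum>(a, b)\<in>monic_pairs z. 1 / (poly_abs a * poly_abs (b :: 'a poly)))
      = (\<Sum>j\<le>z. \<Sum>(a, b)\<in>(\<Union>l\<le>z - j. P j l). 1 / (poly_abs a * poly_abs b))"
    unfolding pairs
    by (rule sum.UNION_disjoint) (auto simp: P_def finite_monic_polys, auto simp: monic_polys_def)
  also have "\<dots> = (\<Sum>j\<le>z. \<Sum>l\<le>z - j. \<Sum>(a, b)\<in>P j l. 1 / (poly_abs a * poly_abs b))"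
    by (intro sum.cong refl sum.UNION_disjoint)
       (auto simp: P_def finite_monic_polys, auto simp: monic_polys_def)
  also have "\<dots> = (\<Sum>j\<le>z. \<Sum>l\<le>z - j. 1)"
  proof (intro sum.cong refl)
    fix j l
    have "(\<Sum>(a, b)\<in>P j l. 1 / (poly_abs a * poly_abs b)) = (\<Sum>_\<in>P j l. 1 / real CARD('a) ^ (j + l))"
      by (intro sum.cong) (auto simp: P_def monic_polys_def poly_abs_def power_add)
    then show "(\<Sum>(a, b)\<in>P j l. 1 / (poly_abs a * poly_abs b)) = 1"
      by (simp add: P_def card_cartesian_product card_monic_polys power_add)
  qed
  also have "\<dots> = (\<Sum>j<Suc z. real (Suc (z - j)))" by (simp add: lessThan_Suc_atMost)
  also have "\<dots> = (\<Sum>j<Suc z. real (Suc j))"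
    using sum.nat_diff_reindex[of "\<lambda>j. real (Suc j)" "Suc z"] by simp
  also have "\<dots> = real (z + 1) * real (z + 2) / 2"
    by (induction z) (simp_all add: field_simps)
  finally show ?thesis .
qed

definition small_primes :: "nat \<Rightarrow> 'a::field poly set" where
  "small_primes z = {p. monic_irreducible p \<and> degree p \<le> z}"

definition admissible_sets :: "nat \<Rightarrow> 'a::field poly set set" where
  "admissible_sets z = {c. c \<subseteq> small_primes z \<and> (\<Sum>p\<in>c. degree p) \<le> z}"

lemma finite_small_primes: "finite (small_primes z :: 'a::{finite,field} poly set)"
  unfolding small_primes_def by (rule finite_degree_le)

lemma finite_admissible_sets: "finite (admissible_sets z :: 'a::{finite,field} poly set set)"
  by (rule finite_subset[of _ "Pow (small_primes z)"])
     (auto simp: admissible_sets_def finite_small_primes)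

lemma sum_degree_Un_admissible_sets:
  fixes c c' :: "'a::{finite,field} poly set"
  assumes "c \<in> admissible_sets z" "c' \<in> admissible_sets z"
  shows "(\<Sum>p\<in>c \<union> c'. degree p) \<le> 2 * z"
proof -
  have "finite c" "finite c'"
    using assms finite_subset[OF _ finite_small_primes] by (auto simp: admissible_sets_def)
  then show ?thesis using assms by (auto simp: admissible_sets_def sum_Un_nat)
qed

definition pair_support :: "'a::field poly set \<Rightarrow> 'a poly \<times> 'a poly \<Rightarrow> 'a poly set" where
  "pair_support F ab = prime_divisors (fst ab) \<union> (prime_divisors (snd ab) - F)"

lemma pair_support_in_admissible_sets:
  fixes ab :: "'a::{finite,field} poly \<times> 'a poly"
  assumes "ab \<in> monic_pairs z"
  shows "pair_support F ab \<in> admissible_sets z"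
proof -
  obtain a b where ab: "ab = (a, b)" and a: "lead_coeff a = 1" and b: "lead_coeff b = 1"
    and deg: "degree a + degree b \<le> z"
    using assms by (auto simp: monic_pairs_def)
  have "a \<noteq> 0" "b \<noteq> 0" using a b by auto
  then have fin: "finite (prime_divisors a)" "finite (prime_divisors b)"
    by (simp_all add: finite_prime_divisors)
  from \<open>a \<noteq> 0\<close> \<open>b \<noteq> 0\<close> have sub: "pair_support F ab \<subseteq> small_primes z"
    using deg
    by (auto simp: ab pair_support_def prime_divisors_def small_primes_def dest!: dvd_imp_degree_le)
  have "(\<Sum>p\<in>pair_support F ab. degree p) \<le> (\<Sum>p\<in>prime_divisors a \<union> prime_divisors b. degree p)"
    using fin by (intro sum_mono2) (auto simp: ab pair_support_def)
  also have "\<dots> \<le> (\<Sum>p\<in>prime_divisors a. degree p) + (\<Sum>p\<in>prime_divisors b. degree p)"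
    using fin by (simp add: sum_Un_nat)
  finally show ?thesis
    using sub sum_degree_prime_divisors_le[OF a] sum_degree_prime_divisors_le[OF b] deg
    by (simp add: admissible_sets_def)
qed

text \<open>
  The possible pairs (exponent of \<open>p\<close> in \<open>a\<close>, exponent of \<open>p\<close> in \<open>b\<close>) for a pair \<open>(a, b)\<close>
  with \<open>pair_support F (a, b) = c\<close> and \<open>p \<in> c \<union> F\<close>: a prime of \<open>F\<close> lies in \<open>c\<close> exactly when
  it divides \<open>a\<close>, and a prime of \<open>c\<close> outside \<open>F\<close> divides \<open>a\<close> or \<open>b\<close>.
\<close>

definition exponent_pairs :: "'a set \<Rightarrow> 'a set \<Rightarrow> nat \<Rightarrow> 'a \<Rightarrow> (nat \<times> nat) set" where
  "exponent_pairs F c z p =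
    (if p \<in> F then (if p \<in> c then {1..z} else {0}) \<times> {..z} else {..z} \<times> {..z} - {(0, 0)})"

lemma finite_exponent_pairs: "finite (exponent_pairs F c z p)"
  by (simp add: exponent_pairs_def)

lemma fiber_pair_support_subset:
  fixes F c :: "'a::{finite,field} poly set"
  assumes fin: "finite (c \<union> F)" and mi: "\<forall>p\<in>c \<union> F. monic_irreducible p"
  shows "{ab \<in> monic_pairs z. pair_support F ab = c}
    \<subseteq> (\<lambda>e. (\<Prod>p\<in>c \<union> F. p ^ fst (e p), \<Prod>p\<in>c \<union> F. p ^ snd (e p)))
        ` PiE (c \<union> F) (exponent_pairs F c z)"
proof
  define D where "D = c \<union> F"
  fix ab
  assume ab_in: "ab \<in> {ab \<in> monic_pairs z. pair_support F ab = c}"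
  obtain a b where ab: "ab = (a, b)" by fastforce
  have c: "c = pair_support F (a, b)" using ab_in by (simp add: ab)
  from ab_in have a: "lead_coeff a = 1" and b: "lead_coeff b = 1" and deg: "degree a + degree b \<le> z"
    by (auto simp: monic_pairs_def ab)
  have "prime_divisors a \<subseteq> D" "prime_divisors b \<subseteq> D"
    by (auto simp: D_def c pair_support_def)
  then obtain ea eb where ea: "a = (\<Prod>p\<in>D. p ^ ea p)" and eb: "b = (\<Prod>p\<in>D. p ^ eb p)"
    using monic_eq_prod_power[OF a] monic_eq_prod_power[OF b] fin mi by (metis D_def)
  have fin': "finite D" and mi': "\<forall>p\<in>D. monic_irreducible p" using fin mi by (simp_all add: D_def)
  have pd: "p \<in> prime_divisors a \<longleftrightarrow> ea p \<noteq> 0" "p \<in> prime_divisors b \<longleftrightarrow> eb p \<noteq> 0" if "p \<in> D" for p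
    using that mi' dvd_prod_power_iff[OF fin' mi' that, of ea]
      dvd_prod_power_iff[OF fin' mi' that, of eb]
    by (auto simp: prime_divisors_def simp flip: ea eb)
  have le: "ea p \<le> z" "eb p \<le> z" if "p \<in> D" for p
    using exponent_le_degree_prod_power[OF fin' mi' that, of ea]
      exponent_le_degree_prod_power[OF fin' mi' that, of eb] deg
    by (simp_all flip: ea eb)
  have "(ea p, eb p) \<in> exponent_pairs F c z p" if "p \<in> D" for p
    using that pd[OF that] le[OF that]
    by (auto simp: exponent_pairs_def D_def c pair_support_def)
  then have "restrict (\<lambda>p. (ea p, eb p)) D \<in> PiE D (exponent_pairs F c z)" by auto
  moreover have "(a, b) = (\<Prod>p\<in>D. p ^ fst (restrict (\<lambda>p. (ea p, eb p)) D p),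
      \<Prod>p\<in>D. p ^ snd (restrict (\<lambda>p. (ea p, eb p)) D p))"
    by (simp add: ea eb cong: prod.cong)
  ultimately show "ab \<in> (\<lambda>e. (\<Prod>p\<in>c \<union> F. p ^ fst (e p), \<Prod>p\<in>c \<union> F. p ^ snd (e p)))
      ` PiE (c \<union> F) (exponent_pairs F c z)"
    unfolding ab D_def by blast
qed

lemma sum_power_cartesian:
  "(\<Sum>(i, j)\<in>A \<times> B. (x :: real) ^ (i + j)) = (\<Sum>i\<in>A. x ^ i) * (\<Sum>j\<in>B. x ^ j)"
  by (simp add: sum_product sum.cartesian_product power_add)

lemma sum_exponent_pairs_le:
  fixes x \<gamma> :: real
  defines "\<delta> \<equiv> x / (1 - x)"
  assumes x: "0 \<le> x" "x < 1" and p: "p \<in> c \<union> F"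
    and \<gamma>: "p \<in> c \<Longrightarrow> p \<in> F \<Longrightarrow> \<delta> \<le> \<gamma>" "p \<in> c \<Longrightarrow> p \<notin> F \<Longrightarrow> 2 * \<delta> + \<delta> ^ 2 \<le> \<gamma>"
  shows "(\<Sum>(i, j)\<in>exponent_pairs F c z p. x ^ (i + j))
    \<le> (if p \<in> c then \<gamma> else 1) * (if p \<in> F then 1 + \<delta> else 1)"
proof -
  define s where "s = (\<Sum>i\<le>z. x ^ i)"
  have "1 / (1 - x) = 1 + \<delta>" using x by (simp add: \<delta>_def field_simps)
  then have s_le: "s \<le> 1 + \<delta>" using sum_power_le_geometric[OF x] by (simp add: s_def)
  have "{..z} = insert 0 {1..z}" by auto
  then have s_eq: "(\<Sum>i\<in>{1..z}. x ^ i) = s - 1" by (simp add: s_def)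
  have "s \<ge> 1" using x s_eq sum_nonneg[of "{1..z}" "\<lambda>i. x ^ i"] by simp
  have "\<delta> \<ge> 0" using x by (simp add: \<delta>_def)
  consider "p \<in> F" "p \<in> c" | "p \<in> F" "p \<notin> c" | "p \<notin> F" "p \<in> c" using p by blast
  then show ?thesis
  proof cases
    case 1
    have "(s - 1) * s \<le> \<delta> * (1 + \<delta>)"
      using s_le \<open>s \<ge> 1\<close> \<open>\<delta> \<ge> 0\<close> by (intro mult_mono) simp_all
    also have "\<dots> \<le> \<gamma> * (1 + \<delta>)" using \<gamma>(1) 1 \<open>\<delta> \<ge> 0\<close> by (intro mult_right_mono) simp_all
    finally show ?thesis using 1 s_eq by (simp add: exponent_pairs_def sum_power_cartesian flip: s_def)
  next
    case 2
    then show ?thesis using s_le by (simp add: exponent_pairs_def sum_power_cartesian flip: s_def)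
  next
    case 3
    have "s * s - 1 \<le> (1 + \<delta>) * (1 + \<delta>) - 1" using s_le \<open>s \<ge> 1\<close> by (simp add: mult_mono)
    also have "\<dots> \<le> \<gamma>" using \<gamma>(2) 3 by (simp add: power2_eq_square algebra_simps)
    finally show ?thesis
      using 3 by (simp add: exponent_pairs_def sum_diff1 sum_power_cartesian flip: s_def)
  qed
qed

lemma sum_fiber_pair_support_le:
  fixes F c :: "'a::{finite,field} poly set" and \<gamma> :: "'a poly \<Rightarrow> real"
  defines "\<delta> p \<equiv> 1 / (poly_abs p - 1)"
  assumes fin: "finite (c \<union> F)" and mi: "\<forall>p\<in>c \<union> F. monic_irreducible p"
    and \<gamma>: "\<forall>p\<in>c \<inter> F. \<delta> p \<le> \<gamma> p" "\<forall>p\<in>c - F. 2 * \<delta> p + \<delta> p ^ 2 \<le> \<gamma> p"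
  shows "(\<Sum>(a, b)\<in>{ab \<in> monic_pairs z. pair_support F ab = c}. 1 / (poly_abs a * poly_abs b))
    \<le> (\<Prod>p\<in>c. \<gamma> p) * (\<Prod>p\<in>F. 1 + \<delta> p)"
proof -
  define D where "D = c \<union> F"
  define T where "T = exponent_pairs F c z"
  define \<Phi> where "\<Phi> e = (\<Prod>p\<in>D. p ^ fst (e p), \<Prod>p\<in>D. p ^ snd (e p))" for e :: "'a poly \<Rightarrow> nat \<times> nat"
  define w where "w ab = 1 / (poly_abs (fst ab) * poly_abs (snd ab))" for ab :: "'a poly \<times> 'a poly"
  have finPiE: "finite (PiE D T)" using fin by (simp add: D_def T_def finite_PiE finite_exponent_pairs)
  have w_nonneg: "w ab \<ge> 0" for ab by (simp add: w_def poly_abs_def)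
  have "(\<Sum>ab\<in>{ab \<in> monic_pairs z. pair_support F ab = c}. w ab) \<le> (\<Sum>ab\<in>\<Phi> ` PiE D T. w ab)"
    using fiber_pair_support_subset[OF fin mi, of z] finPiE w_nonneg
    by (intro sum_mono2) (simp_all add: \<Phi>_def D_def T_def)
  also have "\<dots> \<le> (\<Sum>e\<in>PiE D T. w (\<Phi> e))"
    using sum_image_le[OF finPiE, of w \<Phi>] w_nonneg by (simp add: comp_def)
  also have "\<dots> = (\<Sum>e\<in>PiE D T. \<Prod>p\<in>D. (\<lambda>(i, j). (1 / poly_abs p) ^ (i + j)) (e p))"
  proof -
    have "poly_abs (\<Prod>p\<in>D. p ^ e p) = (\<Prod>p\<in>D. poly_abs p ^ e p)" for e
      by (rule poly_abs_prod_power) (use mi monic_irreducible_nonzero in \<open>auto simp: D_def\<close>)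
    then show ?thesis
      by (intro sum.cong refl)
         (auto simp: w_def \<Phi>_def power_add power_one_over
        prod.distrib case_prod_beta prod_dividef)
  qed
  also have "\<dots> = (\<Prod>p\<in>D. \<Sum>(i, j)\<in>T p. (1 / poly_abs p) ^ (i + j))"
    using fin by (intro prod_sum_PiE[symmetric]) (simp_all add: D_def T_def finite_exponent_pairs)
  also have "\<dots> \<le> (\<Prod>p\<in>D. (if p \<in> c then \<gamma> p else 1) * (if p \<in> F then 1 + \<delta> p else 1))"
  proof (intro prod_mono conjI)
    fix p assume "p \<in> D"
    then have P: "poly_abs p \<ge> 2" using mi poly_abs_ge_two by (auto simp: D_def)
    then have \<delta>p: "(1 / poly_abs p) / (1 - 1 / poly_abs p) = \<delta> p" by (simp add: \<delta>_def field_simps)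
    then show "(\<Sum>(i, j)\<in>T p. (1 / poly_abs p) ^ (i + j))
      \<le> (if p \<in> c then \<gamma> p else 1) * (if p \<in> F then 1 + \<delta> p else 1)"
      using sum_exponent_pairs_le[of "1 / poly_abs p" p c F \<open>\<gamma> p\<close> z, unfolded \<delta>p] P \<open>p \<in> D\<close> \<gamma>
      by (simp add: T_def D_def)
    show "0 \<le> (\<Sum>(i, j)\<in>T p. (1 / poly_abs p) ^ (i + j))"
      using P by (intro sum_nonneg) (simp add: case_prod_beta)
  qed
  also have "\<dots> = (\<Prod>p\<in>c. \<gamma> p) * (\<Prod>p\<in>F. 1 + \<delta> p)"
    using fin by (simp add: prod.distrib prod_if_subset D_def)
  finally show ?thesis by (simp add: w_def case_prod_beta)
qed

theorem sieve_sum_lower_bound: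
  fixes F :: "'a::{finite,field} poly set" and \<gamma> :: "'a poly \<Rightarrow> real"
  defines "\<delta> p \<equiv> 1 / (poly_abs p - 1)"
  assumes F: "F \<subseteq> small_primes z"
    and \<gamma>: "\<forall>p\<in>small_primes z. \<delta> p \<le> \<gamma> p" "\<forall>p\<in>small_primes z - F. 2 * \<delta> p + \<delta> p ^ 2 \<le> \<gamma> p"
  shows "real (z + 1) * real (z + 2) / 2 \<le> (\<Sum>c\<in>admissible_sets z. \<Prod>p\<in>c. \<gamma> p) * (\<Prod>p\<in>F. 1 + \<delta> p)"
proof -
  define w where "w ab = 1 / (poly_abs (fst ab) * poly_abs (snd ab))" for ab :: "'a poly \<times> 'a poly"
  have "real (z + 1) * real (z + 2) / 2 = (\<Sum>ab\<in>monic_pairs z. w ab)"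
    unfolding w_def using sum_monic_pairs[of z, where 'a = 'a] by (simp add: case_prod_beta)
  also have "\<dots> = (\<Sum>c\<in>admissible_sets z. \<Sum>ab\<in>{ab \<in> monic_pairs z. pair_support F ab = c}. w ab)"
    by (rule sum.group[symmetric])
       (auto simp: finite_monic_pairs finite_admissible_sets intro: pair_support_in_admissible_sets)
  also have "\<dots> \<le> (\<Sum>c\<in>admissible_sets z. (\<Prod>p\<in>c. \<gamma> p) * (\<Prod>p\<in>F. 1 + \<delta> p))"
  proof (intro sum_mono)
    fix c :: "'a poly set" assume "c \<in> admissible_sets z"
    then have cF: "c \<union> F \<subseteq> small_primes z" using F by (auto simp: admissible_sets_def)
    then have "finite (c \<union> F)" "\<forall>p\<in>c \<union> F. monic_irreducible p"
      using finite_subset[OF _ finite_small_primes] by (auto simp: small_primes_def)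
    moreover have "\<forall>p\<in>c \<inter> F. \<delta> p \<le> \<gamma> p" "\<forall>p\<in>c - F. 2 * \<delta> p + \<delta> p ^ 2 \<le> \<gamma> p"
      using \<gamma> cF by auto
    ultimately show "(\<Sum>ab\<in>{ab \<in> monic_pairs z. pair_support F ab = c}. w ab)
        \<le> (\<Prod>p\<in>c. \<gamma> p) * (\<Prod>p\<in>F. 1 + \<delta> p)"
      using sum_fiber_pair_support_le[of c F \<gamma> z] by (simp add: w_def case_prod_beta \<delta>_def)
  qed
  finally show ?thesis by (simp add: sum_distrib_right)
qed

lemma divide_one_minus_mono: "0 \<le> (a::real) \<Longrightarrow> a \<le> b \<Longrightarrow> b < 1 \<Longrightarrow> a / (1 - a) \<le> b / (1 - b)"
  by (rule frac_le) simp_all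

lemma density_ratio_ge:
  fixes P g :: real
  assumes P: "2 \<le> P" and g: "g < 1"
  shows "1 / P \<le> g \<Longrightarrow> 1 / (P - 1) \<le> g / (1 - g)"
    and "2 / P \<le> g \<Longrightarrow> 2 * (1 / (P - 1)) + (1 / (P - 1)) ^ 2 \<le> g / (1 - g)"
proof -
  assume "1 / P \<le> g"
  have "1 / (P - 1) = (1 / P) / (1 - 1 / P)" using P by (simp add: field_simps)
  also have "\<dots> \<le> g / (1 - g)" using \<open>1 / P \<le> g\<close> P g by (intro divide_one_minus_mono) simp_all
  finally show "1 / (P - 1) \<le> g / (1 - g)" .
next
  assume g2: "2 / P \<le> g"
  then have "2 \<le> P * g" using P by (simp add: field_simps)
  moreover have "P * g < P" using mult_strict_left_mono[OF g, of P] P by simp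
  ultimately have "P > 2" by linarith
  define D where "D = P - 1"
  have D: "D > 1" using \<open>P > 2\<close> by (simp add: D_def)
  have "2 * (1 / D) + (1 / D) ^ 2 = (2 * D + 1) / (D * D)"
    using D by (simp add: field_simps power2_eq_square)
  also have "\<dots> \<le> 2 / (D - 1)"
    using D by (simp add: divide_simps) (simp add: algebra_simps)
  finally have "2 * (1 / (P - 1)) + (1 / (P - 1)) ^ 2 \<le> 2 / (P - 2)" by (simp add: D_def)
  also have "\<dots> = (2 / P) / (1 - 2 / P)" using \<open>P > 2\<close> by (simp add: field_simps)
  also have "\<dots> \<le> g / (1 - g)" using g2 g P by (intro divide_one_minus_mono) simp_all
  finally show "2 * (1 / (P - 1)) + (1 / (P - 1)) ^ 2 \<le> g / (1 - g)" .
qed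

lemma card_sifted_le_of_densities:
  fixes F :: "'a::{finite,field} poly set" and \<Omega> :: "'a poly \<Rightarrow> 'a poly set"
  defines "g \<equiv> sieve_density \<Omega>"
  assumes "2 * z \<le> n" and F: "F \<subseteq> small_primes z"
    and g: "\<forall>p\<in>small_primes z. \<Omega> p \<subseteq> residues p \<and> 1 / poly_abs p \<le> g p \<and> g p < 1"
    and g2: "\<forall>p\<in>small_primes z - F. 2 / poly_abs p \<le> g p"
  shows "real (card {h \<in> monic_polys n. \<forall>p\<in>small_primes z. h mod p \<notin> \<Omega> p})
      * (real (z + 1) * real (z + 2) / 2)
    \<le> real CARD('a) ^ n * (\<Prod>p\<in>F. 1 + 1 / (poly_abs p - 1))"
proof -
  define S where "S = (small_primes z :: 'a poly set)"
  define T where "T = {h \<in> monic_polys n. \<forall>p\<in>S. h mod p \<notin> \<Omega> p}"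
  define G where "G = (\<Sum>c\<in>admissible_sets z. \<Prod>p\<in>c. g p / (1 - g p))"
  define K where "K = (\<Prod>p\<in>F. 1 + 1 / (poly_abs p - 1))"
  have S: "monic_irreducible p" "poly_abs p \<ge> 2" if "p \<in> S" for p
    using that poly_abs_ge_two by (auto simp: S_def small_primes_def)
  have "K \<ge> 0"
    unfolding K_def
  proof (rule prod_nonneg)
    fix p assume "p \<in> F"
    then have "poly_abs p \<ge> 2" using F S(2) by (auto simp: S_def)
    then show "0 \<le> 1 + 1 / (poly_abs p - 1)" by simp
  qed
  have sifted: "real (card T) * G \<le> real CARD('a) ^ n"
    unfolding T_def G_def g_def
  proof (rule selberg_sieve)
    show "finite S" by (simp add: S_def finite_small_primes)
    show "\<forall>p\<in>S. monic_irreducible p \<and> \<Omega> p \<subseteq> residues p \<and> sieve_density \<Omega> p < 1"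
      using S g by (simp add: g_def S_def)
    show "admissible_sets z \<subseteq> Pow S" "{} \<in> admissible_sets z"
      by (auto simp: admissible_sets_def S_def)
    show "\<forall>c\<in>admissible_sets z. \<forall>c'\<in>admissible_sets z :: 'a poly set set. (\<Sum>p\<in>c \<union> c'. degree p) \<le> n"
      using sum_degree_Un_admissible_sets \<open>2 * z \<le> n\<close> order.trans by blast
  qed
  have lower: "real (z + 1) * real (z + 2) / 2 \<le> G * K"
    unfolding G_def K_def
  proof (rule sieve_sum_lower_bound[OF F])
    show "\<forall>p\<in>small_primes z. 1 / (poly_abs p - 1) \<le> g p / (1 - g p)"
      using S g by (auto simp: S_def intro!: density_ratio_ge(1))
    show "\<forall>p\<in>small_primes z - F.
        2 * (1 / (poly_abs p - 1)) + (1 / (poly_abs p - 1)) ^ 2 \<le> g p / (1 - g p)"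
    proof
      fix p assume p: "p \<in> small_primes z - F"
      then show "2 * (1 / (poly_abs p - 1)) + (1 / (poly_abs p - 1)) ^ 2 \<le> g p / (1 - g p)"
        using S(2) g g2 by (intro density_ratio_ge(2)) (auto simp: S_def)
    qed
  qed
  have "real (card T) * (real (z + 1) * real (z + 2) / 2) \<le> real (card T) * (G * K)"
    using lower by (rule mult_left_mono) simp
  also have "\<dots> = (real (card T) * G) * K" by (simp add: mult_ac)
  also have "\<dots> \<le> real CARD('a) ^ n * K" using sifted \<open>K \<ge> 0\<close> by (rule mult_right_mono)
  finally show ?thesis by (simp add: T_def S_def K_def)
qed

theorem card_sifted_le:
  fixes F :: "'a::{finite,field} poly set" and \<Omega> :: "'a poly \<Rightarrow> 'a poly set"
  assumes "2 * z \<le> n" and F: "F \<subseteq> small_primes z"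
    and \<Omega>: "\<forall>p\<in>small_primes z. \<Omega> p \<subseteq> residues p \<and> 1 \<le> card (\<Omega> p)"
    and \<Omega>2: "\<forall>p\<in>small_primes z - F. 2 \<le> card (\<Omega> p)"
  shows "real (card {h \<in> monic_polys n. \<forall>p\<in>small_primes z. h mod p \<notin> \<Omega> p})
      * (real (z + 1) * real (z + 2) / 2)
    \<le> real CARD('a) ^ n * (\<Prod>p\<in>F. 1 + 1 / (poly_abs p - 1))"
proof (cases "\<exists>p\<in>small_primes z. card (\<Omega> p) = card (residues p)")
  case True
  then obtain p where p: "p \<in> small_primes z" "\<Omega> p = residues p"
    using \<Omega> by (metis card_subset_eq finite_residues)
  then have "p \<noteq> 0" by (auto simp: small_primes_def monic_irreducible_nonzero)
  with p have empty: "{h \<in> monic_polys n. \<forall>p\<in>small_primes z. h mod p \<notin> \<Omega> p} = {}"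
    using mod_in_residues by blast
  have "0 \<le> (\<Prod>p\<in>F. 1 + 1 / (poly_abs p - 1))"
    using F poly_abs_ge_two by (intro prod_nonneg) (force simp: small_primes_def)
  then show ?thesis unfolding empty by simp
next
  case False
  have "card (\<Omega> p) < card (residues p)" if "p \<in> small_primes z" for p
    using False \<Omega> that card_mono[OF finite_residues] by (metis le_neq_implies_less)
  then show ?thesis
    using \<Omega> \<Omega>2 assms(1) F
    by (intro card_sifted_le_of_densities)
       (auto simp: sieve_density_def card_residues poly_abs_def divide_right_mono)
qed

section \<open>Pairs of irreducibles with prescribed difference\<close>

definition twin_residues :: "'a::field poly \<Rightarrow> 'a poly \<Rightarrow> 'a poly set" where
  "twin_residues f p = {a \<in> residues p. p dvd a * (a + f)}"

lemma mod_in_twin_residues_iff: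
  fixes f h p :: "'a::field poly"
  assumes "p \<noteq> 0"
  shows "h mod p \<in> twin_residues f p \<longleftrightarrow> p dvd h * (h + f)"
proof -
  have "(h mod p) * (h mod p + f) mod p = h * (h + f) mod p"
    by (metis mod_add_left_eq mod_mult_left_eq mult.commute)
  then show ?thesis
    using assms mod_in_residues[OF assms] by (simp add: twin_residues_def dvd_eq_mod_eq_0)
qed

lemma card_twin_residues_ge:
  fixes f p :: "'a::{finite,field} poly"
  assumes "p \<noteq> 0"
  shows "1 \<le> card (twin_residues f p)" and "\<not> p dvd f \<Longrightarrow> 2 \<le> card (twin_residues f p)"
proof -
  have sub: "{0, (- f) mod p} \<subseteq> twin_residues f p"
    using mod_in_twin_residues_iff[OF assms, of 0 f] mod_in_twin_residues_iff[OF assms, of "- f" f]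
    by simp
  have fin: "finite (twin_residues f p)"
    by (rule finite_subset[OF _ finite_residues]) (auto simp: twin_residues_def)
  show "1 \<le> card (twin_residues f p)" using card_mono[OF fin, of "{0}"] sub by simp
  assume "\<not> p dvd f"
  then have "(- f) mod p \<noteq> 0" by (simp add: mod_eq_0_iff_dvd)
  then show "2 \<le> card (twin_residues f p)" using card_mono[OF fin sub] by simp
qed

definition twin_irreducibles :: "'a::field poly \<Rightarrow> nat \<Rightarrow> 'a poly set" where
  "twin_irreducibles f n = {h. lead_coeff h = 1 \<and> irreducible h \<and> degree h = n \<and>
     lead_coeff (h + f) = 1 \<and> irreducible (h + f) \<and> degree (h + f) = n}"

lemma twin_irreducibles_not_dvd:
  fixes f h p :: "'a::field poly"
  assumes h: "h \<in> twin_irreducibles f n" and p: "monic_irreducible p" and "degree p < n"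
  shows "\<not> p dvd h * (h + f)"
  using assms irreducible_not_dvd_irreducible_of_degree_less[of h p]
    irreducible_not_dvd_irreducible_of_degree_less[of "h + f" p]
  by (auto simp: twin_irreducibles_def monic_irreducible_def irreducible_dvd_mult_iff)

lemma E_fun_eq: "E_fun f = (\<Prod>p\<in>prime_divisors f. 1 + 1 / poly_abs p)"
  by (simp add: E_fun_def prime_divisors_def monic_irreducible_def)

lemma twin_irreducibles_sifted:
  fixes f :: "'a::field poly"
  assumes "n \<ge> 1"
  shows "twin_irreducibles f n
    \<subseteq> {h \<in> monic_polys n. \<forall>p\<in>small_primes (n div 2). h mod p \<notin> twin_residues f p}"
proof
  fix h assume h: "h \<in> twin_irreducibles f n"
  then have "h \<in> monic_polys n" unfolding twin_irreducibles_def monic_polys_def by blast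
  moreover have "h mod p \<notin> twin_residues f p" if "p \<in> small_primes (n div 2)" for p
  proof -
    have p: "monic_irreducible p" "degree p < n"
      using that assms by (auto simp: small_primes_def)
    then show ?thesis
      using mod_in_twin_residues_iff[OF monic_irreducible_nonzero] twin_irreducibles_not_dvd[OF h]
      by blast
  qed
  ultimately show "h \<in> {h \<in> monic_polys n. \<forall>p\<in>small_primes (n div 2). h mod p \<notin> twin_residues f p}"
    by blast
qed

lemma prod_inverse_pred_le_E_fun:
  fixes f :: "'a::{finite,field} poly"
  assumes "f \<noteq> 0" "F \<subseteq> prime_divisors f"
  shows "(\<Prod>p\<in>F. 1 + 1 / (poly_abs p - 1)) * (1 - 1 / real CARD('a)) \<le> E_fun f"
proof -
  have c: "0 < 1 - 1 / real CARD('a)" using card_field_ge_two[where 'a = 'a] by simp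
  have "finite F" using assms finite_prime_divisors finite_subset by blast
  moreover have "\<forall>p\<in>F. monic_irreducible p" using assms(2) by (auto simp: prime_divisors_def)
  ultimately have "(\<Prod>p\<in>F. 1 + 1 / (poly_abs p - 1))
      \<le> (\<Prod>p\<in>F. 1 + 1 / poly_abs p) / (1 - 1 / real CARD('a))"
    by (rule prod_one_plus_inverse_pred_le)
  also have "\<dots> \<le> E_fun f / (1 - 1 / real CARD('a))"
    using assms c finite_prime_divisors[OF assms(1)] unfolding E_fun_eq
    by (intro divide_right_mono prod_mono2) (auto simp: poly_abs_def)
  finally show ?thesis using c by (simp add: field_simps)
qed

theorem card_twin_irreducibles_le:
  fixes f :: "'a::{finite,field} poly"
  assumes n: "n \<ge> 1" and f: "f \<noteq> 0"
  shows "real (card (twin_irreducibles f n)) * (real (n div 2 + 1) * real (n div 2 + 2) / 2)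
           * (1 - 1 / real CARD('a))
         \<le> real CARD('a) ^ n * E_fun f"
proof -
  define z where "z = n div 2"
  define F where "F = {p \<in> small_primes z. p dvd f}"
  define T where "T = {h \<in> monic_polys n. \<forall>p\<in>small_primes z. h mod p \<notin> twin_residues f p}"
  define K where "K = (\<Prod>p\<in>F. 1 + 1 / (poly_abs p - 1))"
  define X where "X = real (z + 1) * real (z + 2) / 2"
  have c: "0 < 1 - 1 / real CARD('a)" using card_field_ge_two[where 'a = 'a] by simp
  have card_le: "card (twin_irreducibles f n) \<le> card T"
    using twin_irreducibles_sifted[OF n, of f]
    by (intro card_mono) (auto simp: T_def z_def finite_monic_polys)
  have sifted: "real (card T) * X \<le> real CARD('a) ^ n * K"
    unfolding T_def X_def K_def
  proof (rule card_sifted_le)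
    show "2 * z \<le> n" "F \<subseteq> small_primes z" by (auto simp: z_def F_def)
    show "\<forall>p\<in>small_primes z. twin_residues f p \<subseteq> residues p \<and> 1 \<le> card (twin_residues f p)"
      using card_twin_residues_ge(1) monic_irreducible_nonzero
      by (auto simp: twin_residues_def small_primes_def)
    show "\<forall>p\<in>small_primes z - F. 2 \<le> card (twin_residues f p)"
      using card_twin_residues_ge(2) monic_irreducible_nonzero by (auto simp: F_def small_primes_def)
  qed
  have K: "K * (1 - 1 / real CARD('a)) \<le> E_fun f"
    unfolding K_def using f
    by (intro prod_inverse_pred_le_E_fun) (auto simp: F_def small_primes_def prime_divisors_def)
  have "real (card (twin_irreducibles f n)) * X * (1 - 1 / real CARD('a))
      \<le> real (card T) * X * (1 - 1 / real CARD('a))"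
    using card_le c by (intro mult_right_mono) (simp_all add: X_def)
  also have "\<dots> \<le> real CARD('a) ^ n * K * (1 - 1 / real CARD('a))"
    using sifted c by (intro mult_right_mono) simp_all
  also have "\<dots> \<le> real CARD('a) ^ n * E_fun f"
    using K by (simp add: mult.assoc mult_left_mono)
  finally show ?thesis by (simp add: X_def z_def)
qed

lemma square_le_eight_triangle: "real n ^ 2 / 8 \<le> real (n div 2 + 1) * real (n div 2 + 2) / 2"
proof -
  have "n \<le> 2 * (n div 2 + 1)" by presburger
  then have "real n \<le> 2 * real (n div 2 + 1)" by (metis of_nat_mono of_nat_mult of_nat_numeral)
  moreover have "2 * real (n div 2 + 1) \<le> 2 * real (n div 2 + 2)" by simp
  ultimately have "real n * real n \<le> (2 * real (n div 2 + 1)) * (2 * real (n div 2 + 2))"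
    by (intro mult_mono) simp_all
  then show ?thesis by (simp add: power2_eq_square algebra_simps)
qed

theorem A_count_le:
  fixes f :: "'a::{finite,field} poly"
  assumes "n \<ge> 1" "f \<noteq> 0"
  shows "real (A_count f n) \<le> 8 * real CARD('a) ^ n / (real n ^ 2 * (1 - 1 / real CARD('a))) * E_fun f"
proof -
  define c where "c = 1 - 1 / real CARD('a)"
  have c: "c > 0" using card_field_ge_two[where 'a = 'a] by (simp add: c_def)
  have A: "A_count f n = card (twin_irreducibles f n)"
    unfolding A_count_def twin_irreducibles_def ..
  have "real (A_count f n) * (real n ^ 2 / 8) * c
      \<le> real (A_count f n) * (real (n div 2 + 1) * real (n div 2 + 2) / 2) * c"
    using square_le_eight_triangle[of n] c by (intro mult_right_mono mult_left_mono) simp_all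
  also have "\<dots> \<le> real CARD('a) ^ n * E_fun f"
    using card_twin_irreducibles_le[OF assms] by (simp only: A c_def)
  finally show ?thesis using c assms(1) by (simp add: c_def field_simps)
qed

lemma irreducible_smult_iff:
  fixes p :: "'a::field poly"
  assumes "c \<noteq> 0"
  shows "irreducible (smult c p) \<longleftrightarrow> irreducible p"
proof -
  have "is_unit [:c:]" using assms by (simp add: is_unit_iff_degree)
  moreover have "smult c p = [:c:] * p" by simp
  ultimately show ?thesis by (metis irreducible_mult_unit_left)
qed

lemma E_fun_smult: "c \<noteq> 0 \<Longrightarrow> E_fun (smult c f) = E_fun f"
  by (simp add: E_fun_def dvd_smult_iff)

lemma A_tilde_count_le:
  fixes f :: "'a::{finite,field} poly"
  assumes deg: "degree f < n" and bound: "\<And>u. u \<noteq> 0 \<Longrightarrow> real (A_count (smult u f) n) \<le> B"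
  shows "real (A_tilde_count f n) \<le> (real CARD('a) - 1) * B"
proof -
  define A where "A u = twin_irreducibles (smult (inverse u) f) n" for u :: 'a
  have finA: "finite (A u)" for u
    by (rule finite_subset[OF _ finite_monic_polys[of n]])
       (auto simp: A_def twin_irreducibles_def monic_polys_def)
  have "{h. irreducible h \<and> degree h = n \<and> irreducible (h + f) \<and> degree (h + f) = n}
      \<subseteq> (\<Union>u\<in>UNIV - {0}. smult u ` A u)"
  proof
    fix h assume h: "h \<in> {h. irreducible h \<and> degree h = n \<and> irreducible (h + f) \<and> degree (h + f) = n}"
    define u where "u = lead_coeff h"
    have u: "u \<noteq> 0" using h by (auto simp: u_def)
    have "lead_coeff (h + f) = u"
      using h deg lead_coeff_add_le[of f h] by (simp add: u_def add.commute)
    then have "smult (inverse u) h \<in> A u"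
      using h u by (simp add: A_def twin_irreducibles_def irreducible_smult_iff u_def
          flip: smult_add_right)
    moreover have "h = smult u (smult (inverse u) h)" using u by simp
    ultimately show "h \<in> (\<Union>u\<in>UNIV - {0}. smult u ` A u)" using u by blast
  qed
  then have "A_tilde_count f n \<le> card (\<Union>u\<in>UNIV - {0}. smult u ` A u)"
    unfolding A_tilde_count_def by (rule card_mono[rotated]) (simp add: finA)
  also have "\<dots> \<le> (\<Sum>u\<in>UNIV - {0}. card (smult u ` A u))" by (rule card_UN_le) simp
  also have "\<dots> \<le> (\<Sum>u\<in>UNIV - {0}. card (A u))" by (intro sum_mono card_image_le finA)
  finally have "real (A_tilde_count f n) \<le> (\<Sum>u\<in>UNIV - {0::'a}. real (card (A u)))"
    by (simp flip: of_nat_sum)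
  also have "\<dots> \<le> (\<Sum>u\<in>UNIV - {0::'a}. B)"
    using bound by (intro sum_mono) (simp add: A_def A_count_def twin_irreducibles_def)
  also have "\<dots> = (real CARD('a) - 1) * B"
    by (simp add: card_Diff_singleton)
  finally show ?thesis .
qed

theorem A_tilde_count_bound:
  fixes f :: "'a::{finite,field} poly"
  assumes "n \<ge> 1" and "f \<noteq> 0" and "degree f < n"
  shows "real (A_tilde_count f n) \<le> 8 * real CARD('a) ^ (n + 1) / real n ^ 2 * E_fun f"
proof -
  define q where "q = real CARD('a)"
  define B where "B = 8 * q ^ n / (real n ^ 2 * (1 - 1 / q)) * E_fun f"
  have "real (A_count (smult u f) n) \<le> B" if "u \<noteq> 0" for u
  proof -
    have "smult u f \<noteq> 0" using assms(2) that by simp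
    from A_count_le[OF assms(1) this] show ?thesis by (simp only: B_def q_def E_fun_smult[OF that])
  qed
  then have "real (A_tilde_count f n) \<le> (q - 1) * B"
    unfolding q_def by (rule A_tilde_count_le[OF assms(3)])
  also have "\<dots> = 8 * q ^ (n + 1) / real n ^ 2 * E_fun f"
  proof -
    have "q \<ge> 2" using card_field_ge_two[where 'a = 'a] by (simp add: q_def)
    moreover from this have "1 - 1 / q = (q - 1) / q" by (simp add: field_simps)
    moreover have "real n \<noteq> 0" using assms(1) by simp
    ultimately show ?thesis by (simp add: B_def field_simps)
  qed
  finally show ?thesis by (simp add: q_def)
qed

theorem lemma6:
  fixes f :: "'a::{finite,field} poly" and n :: nat
  assumes "n \<ge> 1" and "f \<noteq> 0" and "degree f < n"
  shows "real (A_count f n) \<le> 8 * real CARD('a) ^ n / (real n ^ 2 * (1 - 1 / real CARD('a))) * E_fun f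
       \<and> real (A_tilde_count f n) \<le> 8 * real CARD('a) ^ (n + 1) / real n ^ 2 * E_fun f"
  using A_count_le[OF assms(1,2)] A_tilde_count_bound[OF assms] by blast

end
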